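(* Let $e_1,e_2,e_3$ be nonzero integers with $e_1+e_2+e_3=0$, $e_1,e_2$ odd and $2\,\|\,e_3$. Let $n$ be an odd positive square-free integer and $\Lambda=(d_1,d_2,d_3)$ with $d_1,d_2,d_3$ square-free divisors of $2e_1e_2e_3n$ and $d_1d_2d_3$ a square. If $D^{(n)}_\Lambda(\mathbb{Q}_2)\ne\emptyset$, then $d_3$ is odd.
   Context: $D^{(n)}_\Lambda\subset\mathbb{P}^3$ (coordinates $(t,u_1,u_2,u_3)$) is defined by $e_1nt^2+d_2u_2^2-d_3u_3^2=0$, $e_2nt^2+d_3u_3^2-d_1u_1^2=0$, $e_3nt^2+d_1u_1^2-d_2u_2^2=0$. $2\,\|\,m$ means $2\mid m$, $4\nmid m$. *)

theory Defs
  imports "HOL-Computational_Algebra.Squarefree" "HOL-Number_Theory.Cong"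
begin

text \<open>p-adic integers Z_p realised as the inverse limit of Z/p^k Z:
  a sequence of integers x with x (k+1) = x k (mod p^k) for all k.\<close>

definition padic_seq :: "int \<Rightarrow> (nat \<Rightarrow> int) \<Rightarrow> bool" where
  "padic_seq p x \<longleftrightarrow> (\<forall>k. [x (Suc k) = x k] (mod p ^ k))"

definition padic_zero :: "int \<Rightarrow> (nat \<Rightarrow> int) \<Rightarrow> bool" where
  "padic_zero p x \<longleftrightarrow> (\<forall>k. [x k = 0] (mod p ^ k))"

definition D_eqs :: "int \<Rightarrow> int \<Rightarrow> int \<Rightarrow> int \<Rightarrow> int \<Rightarrow> int \<Rightarrow> int
    \<Rightarrow> int \<Rightarrow> int \<Rightarrow> int \<Rightarrow> int \<Rightarrow> int \<times> int \<times> int" where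
  "D_eqs e1 e2 e3 n d1 d2 d3 t u1 u2 u3 =
     (e1 * n * t^2 + d2 * u2^2 - d3 * u3^2,
      e2 * n * t^2 + d3 * u3^2 - d1 * u1^2,
      e3 * n * t^2 + d1 * u1^2 - d2 * u2^2)"

text \<open>D^(n)_Lambda(Q_p) is nonempty: there is a point (t:u1:u2:u3) of P^3(Q_p)
  on the variety.  Clearing denominators, this is the same as a nonzero vector
  in Z_p^4 satisfying the three equations in Z_p, i.e. modulo p^k for every k.\<close>

definition D_has_Qp_point :: "int \<Rightarrow> int \<Rightarrow> int \<Rightarrow> int \<Rightarrow> int \<Rightarrow> int \<Rightarrow> int \<Rightarrow> int \<Rightarrow> bool" where
  "D_has_Qp_point p e1 e2 e3 n d1 d2 d3 \<longleftrightarrow>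
     (\<exists>t u1 u2 u3.
        padic_seq p t \<and> padic_seq p u1 \<and> padic_seq p u2 \<and> padic_seq p u3 \<and>
        \<not> (padic_zero p t \<and> padic_zero p u1 \<and> padic_zero p u2 \<and> padic_zero p u3) \<and>
        (\<forall>k. let (a, b, c) = D_eqs e1 e2 e3 n d1 d2 d3 (t k) (u1 k) (u2 k) (u3 k) in
               [a = 0] (mod p ^ k) \<and> [b = 0] (mod p ^ k) \<and> [c = 0] (mod p ^ k)))"

end

theory Submission
  imports Defs
begin

text \<open>Suppose \<open>d\<^sub>3\<close> is even. Since the \<open>d\<^sub>i\<close> are squarefree and \<open>d\<^sub>1d\<^sub>2d\<^sub>3\<close> is a square,
  exactly one of \<open>d\<^sub>1, d\<^sub>2\<close> is even. Reducing the equations modulo 4 then shows that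
  every solution modulo 4 has all coordinates even. As the equations are homogeneous
  quadratic, halving a solution modulo \<open>4\<^sup>j\<^sup>+\<^sup>1\<close> gives a solution modulo \<open>4\<^sup>j\<close>, so the
  coordinates of a 2-adic point are divisible by every power of 2, i.e. the point is zero.
  Only the parities of the \<open>e\<^sub>i\<close> and of \<open>n\<close> enter the argument.\<close>

definition dvd3 :: "int \<Rightarrow> int \<times> int \<times> int \<Rightarrow> bool" where
  "dvd3 m v \<longleftrightarrow> (case v of (a, b, c) \<Rightarrow> m dvd a \<and> m dvd b \<and> m dvd c)"

lemma dvd3_simp [simp]: "dvd3 m (a, b, c) \<longleftrightarrow> m dvd a \<and> m dvd b \<and> m dvd c"
  by (simp add: dvd3_def)

lemma dvd3_dvd_trans: "dvd3 m' v \<Longrightarrow> m dvd m' \<Longrightarrow> dvd3 m v"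
  by (cases v) (auto intro: dvd_trans)

lemma dvd3_D_eqs_scale:
  assumes "c \<noteq> 0"
  shows "dvd3 (c\<^sup>2 * m) (D_eqs e1 e2 e3 n d1 d2 d3 (c * t) (c * u1) (c * u2) (c * u3))
     \<longleftrightarrow> dvd3 m (D_eqs e1 e2 e3 n d1 d2 d3 t u1 u2 u3)"
proof -
  have "D_eqs e1 e2 e3 n d1 d2 d3 (c * t) (c * u1) (c * u2) (c * u3)
      = (c\<^sup>2 * (e1 * n * t\<^sup>2 + d2 * u2\<^sup>2 - d3 * u3\<^sup>2),
         c\<^sup>2 * (e2 * n * t\<^sup>2 + d3 * u3\<^sup>2 - d1 * u1\<^sup>2),
         c\<^sup>2 * (e3 * n * t\<^sup>2 + d1 * u1\<^sup>2 - d2 * u2\<^sup>2))"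
    by (simp add: D_eqs_def power_mult_distrib algebra_simps)
  then show ?thesis
    using assms by (simp add: D_eqs_def)
qed

lemma D_eqs_dvd_descent:
  fixes p :: int
  assumes "p \<noteq> 0"
    and mod_sq: "\<And>t u1 u2 u3. dvd3 (p\<^sup>2) (D_eqs e1 e2 e3 n d1 d2 d3 t u1 u2 u3)
                  \<Longrightarrow> p dvd t \<and> p dvd u1 \<and> p dvd u2 \<and> p dvd u3"
    and "dvd3 (p ^ (2 * j)) (D_eqs e1 e2 e3 n d1 d2 d3 t u1 u2 u3)"
  shows "p ^ j dvd t \<and> p ^ j dvd u1 \<and> p ^ j dvd u2 \<and> p ^ j dvd u3"
  using assms(3)
proof (induction j arbitrary: t u1 u2 u3)
  case 0
  then show ?case by simp
next
  case (Suc j)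
  have split: "p ^ (2 * Suc j) = p\<^sup>2 * p ^ (2 * j)"
    by (simp add: power2_eq_square)
  then have "dvd3 (p\<^sup>2) (D_eqs e1 e2 e3 n d1 d2 d3 t u1 u2 u3)"
    using Suc.prems by (metis dvd3_dvd_trans dvd_triv_left)
  then obtain x0 x1 x2 x3 where x: "t = p * x0" "u1 = p * x1" "u2 = p * x2" "u3 = p * x3"
    using mod_sq by (meson dvdE)
  from split have "dvd3 (p ^ (2 * j)) (D_eqs e1 e2 e3 n d1 d2 d3 x0 x1 x2 x3)"
    using Suc.prems dvd3_D_eqs_scale[OF \<open>p \<noteq> 0\<close>] unfolding x by metis
  then show ?case
    using Suc.IH unfolding x by (simp add: mult_dvd_mono)
qed

lemma padic_seq_cong:
  assumes "padic_seq p x" "k \<le> m"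
  shows "[x m = x k] (mod p ^ k)"
  using assms(2)
proof (induction m rule: dec_induct)
  case base
  then show ?case by simp
next
  case (step m)
  have "[x (Suc m) = x m] (mod p ^ m)"
    using assms(1) unfolding padic_seq_def by blast
  then have "[x (Suc m) = x m] (mod p ^ k)"
    using step.hyps(1) by (meson cong_dvd_modulus le_imp_power_dvd)
  then show ?case
    using step.IH by (rule cong_trans)
qed

lemma padic_zeroI:
  assumes "padic_seq p x" "\<And>k. \<exists>m\<ge>k. p ^ k dvd x m"
  shows "padic_zero p x"
  unfolding padic_zero_def
proof
  fix k
  obtain m where "k \<le> m" "p ^ k dvd x m"
    using assms(2) by blast
  then show "[x k = 0] (mod p ^ k)"
    using padic_seq_cong[OF assms(1)] by (meson cong_dvd_iff cong_0_iff)
qed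

lemma not_D_has_Qp_point:
  fixes p :: int
  assumes "p \<noteq> 0"
    and mod_sq: "\<And>t u1 u2 u3. dvd3 (p\<^sup>2) (D_eqs e1 e2 e3 n d1 d2 d3 t u1 u2 u3)
                  \<Longrightarrow> p dvd t \<and> p dvd u1 \<and> p dvd u2 \<and> p dvd u3"
  shows "\<not> D_has_Qp_point p e1 e2 e3 n d1 d2 d3"
proof
  assume "D_has_Qp_point p e1 e2 e3 n d1 d2 d3"
  then obtain t u1 u2 u3 where
    seq: "padic_seq p t" "padic_seq p u1" "padic_seq p u2" "padic_seq p u3"
    and nonzero: "\<not> (padic_zero p t \<and> padic_zero p u1 \<and> padic_zero p u2 \<and> padic_zero p u3)"
    and eqs_cong: "\<forall>k. let (a, b, c) = D_eqs e1 e2 e3 n d1 d2 d3 (t k) (u1 k) (u2 k) (u3 k) in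
               [a = 0] (mod p ^ k) \<and> [b = 0] (mod p ^ k) \<and> [c = 0] (mod p ^ k)"
    unfolding D_has_Qp_point_def by blast
  have eqs: "dvd3 (p ^ k) (D_eqs e1 e2 e3 n d1 d2 d3 (t k) (u1 k) (u2 k) (u3 k))" for k
    using eqs_cong[rule_format, of k] by (simp add: dvd3_def cong_0_iff split: prod.splits)
  have descent: "p ^ k dvd t (2 * k) \<and> p ^ k dvd u1 (2 * k) \<and> p ^ k dvd u2 (2 * k)
      \<and> p ^ k dvd u3 (2 * k)" for k
    using D_eqs_dvd_descent[OF assms eqs] .
  have zero: "padic_zero p x" if "padic_seq p x" "\<And>k. p ^ k dvd x (2 * k)" for x
  proof (rule padic_zeroI[OF that(1)])
    show "\<exists>m\<ge>k. p ^ k dvd x m" for k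
      using that(2)[of k] by (intro exI[of _ "2 * k"]) simp
  qed
  show False
    using zero[OF seq(1)] zero[OF seq(2)] zero[OF seq(3)] zero[OF seq(4)] descent nonzero
    by blast
qed

lemma squarefree_evenE:
  fixes d :: int
  assumes "squarefree d" "even d"
  obtains a where "d = 2 * a" "odd a"
proof -
  obtain a where a: "d = 2 * a"
    using assms(2) by blast
  have "odd a"
  proof
    assume "even a"
    then have "2\<^sup>2 dvd d"
      using a by (auto simp: power2_eq_square)
    then have "is_unit (2 :: int)"
      by (rule squarefreeD[OF assms(1)])
    then show False by simp
  qed
  with a that show ?thesis by blast
qed

lemma square_neq_double_odd:
  fixes a r :: int
  assumes "odd a"
  shows "r\<^sup>2 \<noteq> 2 * a"
proof
  assume r: "r\<^sup>2 = 2 * a"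
  then have "even r"
    by (metis dvd_triv_left even_power)
  then obtain s where "r = 2 * s" by blast
  with r have "a = 2 * s\<^sup>2"
    by (simp add: power2_eq_square)
  with assms show False by simp
qed

lemma exactly_one_even_if_product_square:
  fixes d1 d2 a3 r :: int
  assumes "squarefree d1" "squarefree d2" "odd a3" "d1 * d2 * (2 * a3) = r\<^sup>2"
  shows "(\<exists>a1. d1 = 2 * a1 \<and> odd a1) \<and> odd d2 \<or> odd d1 \<and> (\<exists>a2. d2 = 2 * a2 \<and> odd a2)"
proof (cases "even d1"; cases "even d2")
  assume "even d1" "even d2"
  then obtain a1 a2 where a: "d1 = 2 * a1" "odd a1" "d2 = 2 * a2" "odd a2"
    using squarefree_evenE[OF assms(1)] squarefree_evenE[OF assms(2)] by metis
  then have r: "r\<^sup>2 = 2 * (4 * (a1 * a2 * a3))"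
    using assms(4) by (simp add: algebra_simps)
  then have "even r"
    by (metis dvd_triv_left even_power)
  then obtain s where "r = 2 * s" by blast
  with r have "s\<^sup>2 = 2 * (a1 * a2 * a3)"
    by (simp add: power2_eq_square)
  with a assms(3) show ?thesis
    using square_neq_double_odd by simp
next
  assume "odd d1" "odd d2"
  with assms(3,4) show ?thesis
    using square_neq_double_odd[of "d1 * d2 * a3" r] by (simp add: algebra_simps)
next
  assume "even d1" "odd d2"
  then show ?thesis
    using squarefree_evenE[OF assms(1)] by blast
next
  assume "odd d1" "even d2"
  then show ?thesis
    using squarefree_evenE[OF assms(2)] by blast
qed

lemma even_if_4_dvd:
  fixes a y w :: int
  assumes "odd a" "4 dvd 2 * a * y\<^sup>2 + 4 * w"
  shows "even y"
proof -
  have "2 * 2 dvd 2 * (a * y\<^sup>2)"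
    using assms(2) by (simp add: dvd_add_left_iff mult.assoc)
  then have "even (a * y\<^sup>2)"
    by (simp only: dvd_mult_cancel_left) simp
  with assms(1) show ?thesis by simp
qed

lemma quadratic_pair_mod4_even:
  fixes g h c a b t x y z :: int
  assumes "odd g" "odd c" "odd a" "odd b"
    and first: "4 dvd g * t\<^sup>2 + c * x\<^sup>2 + 2 * a * y\<^sup>2"
    and second: "4 dvd 2 * h * t\<^sup>2 + c * x\<^sup>2 + 2 * b * z\<^sup>2"
  shows "even t \<and> even x \<and> even y \<and> even z"
proof -
  have "even (2 * h * t\<^sup>2 + c * x\<^sup>2 + 2 * b * z\<^sup>2)"
    using second by (rule dvd_trans[rotated]) simp
  with assms(2) have "even x" by simp
  have "even (g * t\<^sup>2 + c * x\<^sup>2 + 2 * a * y\<^sup>2)"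
    using first by (rule dvd_trans[rotated]) simp
  with assms(1) \<open>even x\<close> have "even t" by simp
  obtain t' x' where tx: "t = 2 * t'" "x = 2 * x'"
    using \<open>even t\<close> \<open>even x\<close> by blast
  have "4 dvd 2 * a * y\<^sup>2 + 4 * (g * t'\<^sup>2 + c * x'\<^sup>2)"
    using first unfolding tx by (simp add: power2_eq_square algebra_simps)
  with assms(3) have "even y" by (rule even_if_4_dvd)
  have "4 dvd 2 * b * z\<^sup>2 + 4 * (2 * h * t'\<^sup>2 + c * x'\<^sup>2)"
    using second unfolding tx by (simp add: power2_eq_square algebra_simps)
  with assms(4) have "even z" by (rule even_if_4_dvd)
  with \<open>even t\<close> \<open>even x\<close> \<open>even y\<close> show ?thesis by blast
qed

lemma D_eqs_mod4_even:
  fixes e1 e2 e3 n d1 d2 d3 a3 :: int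
  assumes "odd e1" "odd e2" "even e3" "odd n" "d3 = 2 * a3" "odd a3"
    and "(\<exists>a1. d1 = 2 * a1 \<and> odd a1) \<and> odd d2 \<or> odd d1 \<and> (\<exists>a2. d2 = 2 * a2 \<and> odd a2)"
    and "dvd3 4 (D_eqs e1 e2 e3 n d1 d2 d3 t u1 u2 u3)"
  shows "even t \<and> even u1 \<and> even u2 \<and> even u3"
proof -
  obtain f where f: "e3 = 2 * f"
    using assms(3) by blast
  have eqs: "4 dvd e1 * n * t\<^sup>2 + d2 * u2\<^sup>2 - d3 * u3\<^sup>2"
    "4 dvd e2 * n * t\<^sup>2 + d3 * u3\<^sup>2 - d1 * u1\<^sup>2"
    "4 dvd e3 * n * t\<^sup>2 + d1 * u1\<^sup>2 - d2 * u2\<^sup>2"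
    using assms(8) by (simp_all add: D_eqs_def)
  \<comment> \<open>In each case one of the two equations used is negated to match the signs of
    \<open>quadratic_pair_mod4_even\<close>.\<close>
  from assms(7) show ?thesis
  proof (elim disjE conjE exE)
    fix a1
    assume "d1 = 2 * a1" "odd a1" "odd d2"
    moreover have "4 dvd 2 * (- f * n) * t\<^sup>2 + d2 * u2\<^sup>2 + 2 * (- a1) * u1\<^sup>2"
      using eqs(3) dvd_minus_iff unfolding f \<open>d1 = 2 * a1\<close> by (fastforce simp: algebra_simps)
    ultimately show ?thesis
      using quadratic_pair_mod4_even[of "e1 * n" d2 "- a3" "- a1" t u2 u3 "- f * n" u1]
        eqs(1) assms(1,4,5,6) by (simp add: algebra_simps)
  next
    fix a2
    assume "odd d1" "d2 = 2 * a2" "odd a2"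
    moreover have "4 dvd - e2 * n * t\<^sup>2 + d1 * u1\<^sup>2 + 2 * (- a3) * u3\<^sup>2"
      using eqs(2) dvd_minus_iff unfolding assms(5) by (fastforce simp: algebra_simps)
    ultimately show ?thesis
      using quadratic_pair_mod4_even[of "- e2 * n" d1 "- a3" "- a2" t u1 u3 "f * n" u2]
        eqs(3) assms(2,4,6) unfolding f by (simp add: algebra_simps)
  qed
qed

theorem lemma3p1:
  fixes e1 e2 e3 n d1 d2 d3 :: int
  assumes "e1 \<noteq> 0" "e2 \<noteq> 0" "e3 \<noteq> 0"
    and "e1 + e2 + e3 = 0"
    and "odd e1" "odd e2"
    and "2 dvd e3" "\<not> 4 dvd e3"
    and "n > 0" "odd n" "squarefree n"
    and "squarefree d1" "squarefree d2" "squarefree d3"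
    and "d1 dvd 2 * e1 * e2 * e3 * n" "d2 dvd 2 * e1 * e2 * e3 * n" "d3 dvd 2 * e1 * e2 * e3 * n"
    and "\<exists>r::int. d1 * d2 * d3 = r ^ 2"
    and "D_has_Qp_point 2 e1 e2 e3 n d1 d2 d3"
  shows "odd d3"
proof (rule ccontr)
  assume "\<not> odd d3"
  then obtain a3 where a3: "d3 = 2 * a3" "odd a3"
    using assms(14) squarefree_evenE by blast
  obtain r where "d1 * d2 * d3 = r\<^sup>2"
    using assms(18) by blast
  then have one_even: "(\<exists>a1. d1 = 2 * a1 \<and> odd a1) \<and> odd d2 \<or> odd d1 \<and> (\<exists>a2. d2 = 2 * a2 \<and> odd a2)"
    using exactly_one_even_if_product_square assms(12,13) a3 by blast
  have "\<not> D_has_Qp_point 2 e1 e2 e3 n d1 d2 d3"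
    using not_D_has_Qp_point[of 2] D_eqs_mod4_even[OF assms(5,6,7,10) a3 one_even] by simp
  with assms(19) show False by contradiction
qed

end
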